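(* In the model and protocol $\mathrm{OciorABA}$ described in the context, with $n\ge 3t+1$ and every honest node receiving an input message, if any honest node outputs a value $w$, then every honest node eventually outputs $w$.
   Context: Model: there are $n$ nodes $\mathrm{Node}_1,\dots,\mathrm{Node}_n$ in an asynchronous network (every message sent between honest nodes is eventually delivered, with arbitrary adversarial delay). An adaptive adversary may corrupt at most $t$ nodes in total; $\mathcal F\subseteq[1:n]$ denotes the set of dishonest nodes; $n\ge 3t+1$. The symbol $\bot$ denotes "missing"; for a vector $v\in\{0,1,\bot\}^n$ let $\mathcal M(v)=\{j\in[1:n]: v[j]\neq\bot\}$. Primitives used as black boxes: (RBC) For each $j\in[1:n]$ a reliable broadcast instance $\mathrm{RBC}_j$ with leader $\mathrm{Node}_j$, satisfying Consistency (two honest outputs are equal), Validity (if the leader is honest and inputs $w$, every honest node eventually outputs $w$), and Totality (if one honest node outputs a value, every honest node eventually outputs a value). (APVA) An asynchronous partial vector agreement instance: each honest $\mathrm{Node}_i$ holds an input vector $a_i\in\{0,1,\bot\}^n$, initially all $\bot$, whose entries may over time change from $\bot$ to a value in $\{0,1\}$ (and are then fixed); each node outputs at most one vector in $\{0,1,\bot\}^n$. It satisfies: Consistency (if an honest node outputs $v$, every honest node eventually outputs $v$); Validity (if an honest node outputs $v$, then for every $j$ with $v[j]\neq\bot$ some honest $\mathrm{Node}_i$ has input $a_i[j]=v[j]$, and $|\mathcal M(v)|\ge n-t$); Termination (if there is a set of at least $n-t$ positions at which all honest nodes have non-missing input entries, then every honest node eventually outputs a vector and terminates). (Erasure code) An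 $(n,t+1)$ erasure code: $\mathrm{Enc}(w)=(\mathrm{Enc}_1(w),\dots,\mathrm{Enc}_n(w))$ and $\mathrm{Dec}$ with $\mathrm{Dec}(\{\mathrm{Enc}_j(w)\}_{j\in K})=w$ for every $K\subseteq[1:n]$, $|K|=t+1$. Protocol $\mathrm{OciorABA}$, code for an honest $\mathrm{Node}_i$ with input message $w_i$: (1) Compute $(y^{(i)}_1,\dots,y^{(i)}_n)=\mathrm{Enc}(w_i)$ and input $y^{(i)}_i$ into $\mathrm{RBC}_i$ (as leader). (2) Upon delivery of $y^{(j)}_j$ from $\mathrm{RBC}_j$ (after step (1)), set $a_i[j]=1$ if $y^{(j)}_j=y^{(i)}_j$ and $a_i[j]=0$ otherwise, and pass $a_i[j]$ into APVA as the $j$-th entry of its input vector. (3) Upon APVA outputting $v$: let $S=\{j: v[j]=1\}$. If $|S|<t+1$, output a default value $\bot$ and terminate. Otherwise let $K$ be the $t+1$ smallest elements of $S$, wait for delivery of $y^{(j)}_j$ from $\mathrm{RBC}_j$ for all $j\in K$, output $\mathrm{Dec}(\{y^{(j)}_j\}_{j\in K})$ and terminate. *)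

theory Defs
  imports Main
begin

text \<open>
Nodes are 1..n; time is a global discrete event index (nat); "eventually" means
"at some later time".  Vectors in {0,1,bot}^n are functions nat => bool option
(Some True = 1, Some False = 0, None = bot), only indices 1..n are relevant.

 dlv tau i j   : value delivered by node i from RBC_j by time tau (None = not yet)
 apva tau i    : vector output by node i from APVA by time tau (None = not yet)
 w i           : input message of (honest) node i
 Enc w j       : j-th coded symbol of w;  Dec takes a partial map of symbols.
\<close>

datatype 'w outv = Default | Val 'w

definition honest :: "nat \<Rightarrow> nat set \<Rightarrow> nat set" where
  "honest n F = {1..n} - F"

definition missing_free :: "nat \<Rightarrow> (nat \<Rightarrow> bool option) \<Rightarrow> nat set" where
  "missing_free n v = {j \<in> {1..n}. v j \<noteq> None}"

definition apva_input ::
  "('w \<Rightarrow> nat \<Rightarrow> 'y) \<Rightarrow> (nat \<Rightarrow> 'w) \<Rightarrow> (nat \<Rightarrow> nat \<Rightarrow> nat \<Rightarrow> 'y option)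
   \<Rightarrow> nat \<Rightarrow> nat \<Rightarrow> nat \<Rightarrow> bool option" where
  "apva_input Enc w dlv tau i j = map_option (\<lambda>y. y = Enc (w i) j) (dlv tau i j)"

text \<open>The t+1 smallest elements of S.\<close>
definition smallest :: "nat set \<Rightarrow> nat \<Rightarrow> nat set" where
  "smallest S t = {j \<in> S. card {k \<in> S. k < j} < Suc t}"

text \<open>Output of node i by time tau according to step (3) (None = no output yet).\<close>
definition node_output ::
  "nat \<Rightarrow> nat \<Rightarrow> ((nat \<Rightarrow> 'y option) \<Rightarrow> 'w) \<Rightarrow> (nat \<Rightarrow> nat \<Rightarrow> nat \<Rightarrow> 'y option)
   \<Rightarrow> (nat \<Rightarrow> nat \<Rightarrow> (nat \<Rightarrow> bool option) option) \<Rightarrow> nat \<Rightarrow> nat \<Rightarrow> 'w outv option" where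
  "node_output n t Dec dlv apva tau i =
     (case apva tau i of
        None \<Rightarrow> None
      | Some v \<Rightarrow>
          (let S = {j \<in> {1..n}. v j = Some True} in
           if card S < Suc t then Some Default
           else (let K = smallest S t in
                 if (\<forall>j\<in>K. dlv tau i j \<noteq> None)
                 then Some (Val (Dec (\<lambda>j. if j \<in> K then dlv tau i j else None)))
                 else None)))"

text \<open>Admissible executions: model assumptions plus black-box properties of
RBC, APVA and the erasure code (all stated for honest nodes).\<close>
definition ocior_execution ::
  "nat \<Rightarrow> nat \<Rightarrow> nat set \<Rightarrow> ('w \<Rightarrow> nat \<Rightarrow> 'y) \<Rightarrow> ((nat \<Rightarrow> 'y option) \<Rightarrow> 'w)
   \<Rightarrow> (nat \<Rightarrow> 'w) \<Rightarrow> (nat \<Rightarrow> nat \<Rightarrow> nat \<Rightarrow> 'y option)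
   \<Rightarrow> (nat \<Rightarrow> nat \<Rightarrow> (nat \<Rightarrow> bool option) option) \<Rightarrow> bool" where
  "ocior_execution n t F Enc Dec w dlv apva \<longleftrightarrow>
     \<comment> \<open>model\<close>
     n \<ge> 3 * t + 1 \<and> F \<subseteq> {1..n} \<and> card F \<le> t
     \<comment> \<open>erasure code\<close>
   \<and> (\<forall>m K. K \<subseteq> {1..n} \<and> card K = t + 1 \<longrightarrow>
          Dec (\<lambda>j. if j \<in> K then Some (Enc m j) else None) = m)
     \<comment> \<open>each delivery / output happens at most once and is then fixed\<close>
   \<and> (\<forall>i\<in>honest n F. \<forall>j tau tau' y. dlv tau i j = Some y \<and> tau \<le> tau'
          \<longrightarrow> dlv tau' i j = Some y)
   \<and> (\<forall>i\<in>honest n F. \<forall>tau tau' v. apva tau i = Some v \<and> tau \<le> tau'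
          \<longrightarrow> apva tau' i = Some v)
     \<comment> \<open>RBC consistency\<close>
   \<and> (\<forall>j\<in>{1..n}. \<forall>i\<in>honest n F. \<forall>i'\<in>honest n F. \<forall>tau tau' y y'.
          dlv tau i j = Some y \<and> dlv tau' i' j = Some y' \<longrightarrow> y = y')
     \<comment> \<open>RBC validity (honest leader j inputs Enc_j(w_j) in step (1))\<close>
   \<and> (\<forall>j\<in>honest n F. \<forall>i\<in>honest n F. \<exists>tau. dlv tau i j = Some (Enc (w j) j))
     \<comment> \<open>RBC totality\<close>
   \<and> (\<forall>j\<in>{1..n}. \<forall>i\<in>honest n F. \<forall>i'\<in>honest n F. \<forall>tau.
          dlv tau i j \<noteq> None \<longrightarrow> (\<exists>tau'. dlv tau' i' j \<noteq> None))
     \<comment> \<open>APVA consistency\<close>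
   \<and> (\<forall>i\<in>honest n F. \<forall>i'\<in>honest n F. \<forall>tau v.
          apva tau i = Some v \<longrightarrow> (\<exists>tau'. apva tau' i' = Some v))
     \<comment> \<open>APVA validity\<close>
   \<and> (\<forall>i\<in>honest n F. \<forall>tau v. apva tau i = Some v \<longrightarrow>
          (\<forall>j\<in>{1..n}. v j \<noteq> None \<longrightarrow>
             (\<exists>i'\<in>honest n F. \<exists>tau'. apva_input Enc w dlv tau' i' j = v j))
          \<and> card (missing_free n v) \<ge> n - t)
     \<comment> \<open>APVA termination\<close>
   \<and> ((\<exists>P \<subseteq> {1..n}. card P \<ge> n - t \<and>
          (\<exists>tau. \<forall>i\<in>honest n F. \<forall>j\<in>P. apva_input Enc w dlv tau i j \<noteq> None))
       \<longrightarrow> (\<forall>i\<in>honest n F. \<exists>tau v. apva tau i = Some v))"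

end

theory Submission
  imports Defs
begin

text \<open>
An honest node's output is a function of its APVA vector and of the RBC symbols it has
delivered at the positions it decodes from. APVA consistency hands every honest node the
same vector, and RBC totality and consistency hand it the same symbols at those positions;
since both kinds of output are permanent, all of this eventually holds at one common time,
at which the other node produces the same output.
\<close>

lemma node_output_transfer:
  assumes "node_output n t Dec dlv apva tau i = Some out"
    and "apva tau' i' = apva tau i"
    and "\<And>j. j \<in> {1..n} \<Longrightarrow> dlv tau i j \<noteq> None \<Longrightarrow> dlv tau' i' j = dlv tau i j"
  shows "node_output n t Dec dlv apva tau' i' = Some out"
proof -
  obtain v where v: "apva tau i = Some v"
    using assms(1) by (cases "apva tau i") (auto simp: node_output_def)
  define S where "S = {j \<in> {1..n}. v j = Some True}"
  define K where "K = smallest S t"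
  have output_of_vector: "node_output n t Dec dlv apva s k =
      (if card S < Suc t then Some Default
       else if \<forall>j\<in>K. dlv s k j \<noteq> None
       then Some (Val (Dec (\<lambda>j. if j \<in> K then dlv s k j else None))) else None)"
    if "apva s k = Some v" for s k
    using that unfolding node_output_def S_def K_def by (auto simp: Let_def)
  show ?thesis
  proof (cases "card S < Suc t")
    case True
    then show ?thesis
      using assms(1,2) v output_of_vector by simp
  next
    case False
    then have delivered: "\<forall>j\<in>K. dlv tau i j \<noteq> None"
      using assms(1) output_of_vector[OF v] by (simp split: if_splits)
    with False have out: "out = Val (Dec (\<lambda>j. if j \<in> K then dlv tau i j else None))"
      using assms(1) output_of_vector[OF v] by simp
    have "K \<subseteq> {1..n}"
      unfolding K_def S_def smallest_def by auto
    then have same: "\<forall>j\<in>K. dlv tau' i' j = dlv tau i j"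
      using assms(3) delivered by blast
    then have "(\<lambda>j. if j \<in> K then dlv tau' i' j else None)
        = (\<lambda>j. if j \<in> K then dlv tau i j else None)"
      by auto
    moreover have "\<forall>j\<in>K. dlv tau' i' j \<noteq> None"
      using same delivered by simp
    ultimately show ?thesis
      using output_of_vector[of tau' i'] assms(2) v False out by simp
  qed
qed

lemma eventually_sequentially_if_stable:
  assumes "P s" and "\<And>s s'. P s \<Longrightarrow> s \<le> s' \<Longrightarrow> P s'"
  shows "eventually P sequentially"
  using assms by (auto simp: eventually_sequentially)

context
  fixes n t F Enc Dec w dlv apva
  assumes exec: "ocior_execution n t F Enc Dec w dlv apva"
begin

lemma ocior_delivery_stable:
  assumes "i \<in> honest n F" "dlv tau i j = Some y" "tau \<le> tau'"
  shows "dlv tau' i j = Some y"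
proof -
  have "\<forall>i\<in>honest n F. \<forall>j tau tau' y. dlv tau i j = Some y \<and> tau \<le> tau'
          \<longrightarrow> dlv tau' i j = Some y"
    using exec unfolding ocior_execution_def by (elim conjE) assumption
  with assms show ?thesis by blast
qed

lemma ocior_apva_stable:
  assumes "i \<in> honest n F" "apva tau i = Some v" "tau \<le> tau'"
  shows "apva tau' i = Some v"
proof -
  have "\<forall>i\<in>honest n F. \<forall>tau tau' v. apva tau i = Some v \<and> tau \<le> tau'
          \<longrightarrow> apva tau' i = Some v"
    using exec unfolding ocior_execution_def by (elim conjE) assumption
  with assms show ?thesis by blast
qed

lemma ocior_rbc_consistent:
  assumes "j \<in> {1..n}" "i \<in> honest n F" "i' \<in> honest n F"
    "dlv tau i j = Some y" "dlv tau' i' j = Some y'"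
  shows "y = y'"
proof -
  have "\<forall>j\<in>{1..n}. \<forall>i\<in>honest n F. \<forall>i'\<in>honest n F. \<forall>tau tau' y y'.
          dlv tau i j = Some y \<and> dlv tau' i' j = Some y' \<longrightarrow> y = y'"
    using exec unfolding ocior_execution_def by (elim conjE) assumption
  with assms show ?thesis by blast
qed

lemma ocior_rbc_total:
  assumes "j \<in> {1..n}" "i \<in> honest n F" "i' \<in> honest n F" "dlv tau i j \<noteq> None"
  shows "\<exists>tau'. dlv tau' i' j \<noteq> None"
proof -
  have "\<forall>j\<in>{1..n}. \<forall>i\<in>honest n F. \<forall>i'\<in>honest n F. \<forall>tau.
          dlv tau i j \<noteq> None \<longrightarrow> (\<exists>tau'. dlv tau' i' j \<noteq> None)"
    using exec unfolding ocior_execution_def by (elim conjE) assumption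
  with assms show ?thesis by blast
qed

lemma ocior_apva_consistent:
  assumes "i \<in> honest n F" "i' \<in> honest n F" "apva tau i = Some v"
  shows "\<exists>tau'. apva tau' i' = Some v"
proof -
  have "\<forall>i\<in>honest n F. \<forall>i'\<in>honest n F. \<forall>tau v.
          apva tau i = Some v \<longrightarrow> (\<exists>tau'. apva tau' i' = Some v)"
    using exec unfolding ocior_execution_def by (elim conjE) assumption
  with assms show ?thesis by blast
qed

lemma ocior_eventually_same_apva:
  assumes "i \<in> honest n F" "i' \<in> honest n F" "apva tau i = Some v"
  shows "eventually (\<lambda>s. apva s i' = Some v) sequentially"
proof -
  obtain s where "apva s i' = Some v"
    using ocior_apva_consistent assms by blast
  then show ?thesis
    by (rule eventually_sequentially_if_stable) (rule ocior_apva_stable[OF assms(2)])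
qed

lemma ocior_eventually_same_delivery:
  assumes "j \<in> {1..n}" "i \<in> honest n F" "i' \<in> honest n F" "dlv tau i j = Some y"
  shows "eventually (\<lambda>s. dlv s i' j = Some y) sequentially"
proof -
  obtain s y' where delivered: "dlv s i' j = Some y'"
    using ocior_rbc_total assms by blast
  moreover have "y = y'"
    using ocior_rbc_consistent[OF assms(1-4) delivered] .
  ultimately show ?thesis
    by (intro eventually_sequentially_if_stable) (blast intro: ocior_delivery_stable[OF assms(3)])+
qed

end

theorem theorem6:
  fixes n t :: nat and F :: "nat set"
    and Enc :: "'w \<Rightarrow> nat \<Rightarrow> 'y" and Dec :: "(nat \<Rightarrow> 'y option) \<Rightarrow> 'w"
    and w :: "nat \<Rightarrow> 'w"
    and dlv :: "nat \<Rightarrow> nat \<Rightarrow> nat \<Rightarrow> 'y option"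
    and apva :: "nat \<Rightarrow> nat \<Rightarrow> (nat \<Rightarrow> bool option) option"
  assumes "ocior_execution n t F Enc Dec w dlv apva"
    and "i \<in> honest n F"
    and "node_output n t Dec dlv apva tau i = Some out"
    and "i' \<in> honest n F"
  shows "\<exists>tau'. node_output n t Dec dlv apva tau' i' = Some out"
proof -
  define D where "D = {j \<in> {1..n}. dlv tau i j \<noteq> None}"
  obtain v where "apva tau i = Some v"
    using assms(3) by (cases "apva tau i") (auto simp: node_output_def)
  then have "eventually (\<lambda>s. apva s i' = apva tau i) sequentially"
    using ocior_eventually_same_apva[OF assms(1,2,4)] by simp
  moreover have "eventually (\<lambda>s. dlv s i' j = dlv tau i j) sequentially" if "j \<in> D" for j
    using that ocior_eventually_same_delivery[OF assms(1) _ assms(2,4)] by (auto simp: D_def)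
  then have "eventually (\<lambda>s. \<forall>j\<in>D. dlv s i' j = dlv tau i j) sequentially"
    by (intro eventually_ball_finite) (auto simp: D_def)
  ultimately have "eventually (\<lambda>s. apva s i' = apva tau i \<and> (\<forall>j\<in>D. dlv s i' j = dlv tau i j))
      sequentially"
    by (rule eventually_conj)
  then obtain tau' where "apva tau' i' = apva tau i" "\<forall>j\<in>D. dlv tau' i' j = dlv tau i j"
    unfolding eventually_sequentially by blast
  then show ?thesis
    using node_output_transfer[OF assms(3)] unfolding D_def by blast
qed

end
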